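(* Let $S\subseteq\mathbb{F}_2^{27}$ be the linear subspace spanned by the six vectors (written as bit strings, coordinate $1$ leftmost, coordinate $27$ rightmost) $\xi^1 = 100010001010101010100011110$, $\xi^2 = 101010111001100000001010101$, $\xi^3 = 011001100111100111100110011$, $\xi^4 = 000111100000011001100001111$, $\xi^5 = 000000011111111000011111111$, $\xi^6 = 000000000000000111111111111$, and let $Q(x)= x_{1}x_{2} + x_{1}x_{3} + x_{1}x_{8} + x_{2}x_{4} + x_{2}x_{8} + x_{2}x_{16} + x_{3}x_{4} + x_{3}x_{8} + x_{3}x_{16} + x_{4}x_{8} + x_{8}x_{16}$ (mod $2$). Let $e=(e_1,\dots,e_{27})=(3, 5, 7, 5, 1, 3, 5, 7, 1, 3, 5, 5, 3, 7, 3, 3, 7, 1, 7, 3, 1, 5, 5, 5, 3, 5, 3)$ and $c_j=e^{\pi i e_j/4}$. Then $(-1)^{Q(x)}=\prod_{j=1}^{27}c_j^{x_j}$ for every $x\in S$, but there do not exist $c'_1,\dots,c'_{27}\in\{\pm1,\pm i\}$ with $(-1)^{Q(x)}=\prod_{j=1}^{27}(c'_j)^{x_j}$ for every $x\in S$. In particular the following statement (QFP) is false in general: "if $S$ is a linear subspace of $\mathbb{F}_2^n$, $Q:\mathbb{F}_2^n\to\mathbb{F}_2$ is a quadratic function, and there exist complex phases $c_j$ with $(-1)^{Q(x)}=\prod_j c_j^{x_j}$ for all $x\in S$, then the phases can be chosen from $\{\pm1,\pm i\}$."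
   Context: Vectors $x\in\mathbb{F}_2^{27}$ have coordinates $x_j\in\{0,1\}$, which are used as integer exponents in $c_j^{x_j}$. *)

theory Defs
  imports Complex_Main
begin

text \<open>Vectors of F_2^n are represented as functions x :: nat => nat with
  x j in {0,1} for 1 <= j <= n and x j = 0 outside {1..n}.  Addition is
  coordinatewise mod 2.\<close>

definition F2vec :: "nat \<Rightarrow> (nat \<Rightarrow> nat) set" where
  "F2vec n = {x. (\<forall>j. x j \<in> {0,1}) \<and> (\<forall>j. j \<notin> {1..n} \<longrightarrow> x j = 0)}"

definition F2add :: "(nat \<Rightarrow> nat) \<Rightarrow> (nat \<Rightarrow> nat) \<Rightarrow> nat \<Rightarrow> nat" where
  "F2add x y = (\<lambda>j. (x j + y j) mod 2)"

definition F2_subspace :: "nat \<Rightarrow> (nat \<Rightarrow> nat) set \<Rightarrow> bool" where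
  "F2_subspace n S \<longleftrightarrow> S \<subseteq> F2vec n \<and> (\<lambda>_. 0) \<in> S \<and> (\<forall>x\<in>S. \<forall>y\<in>S. F2add x y \<in> S)"

definition F2_span :: "(nat \<Rightarrow> nat \<Rightarrow> nat) \<Rightarrow> nat set \<Rightarrow> (nat \<Rightarrow> nat) set" where
  "F2_span v K = {(\<lambda>j. (\<Sum>k\<in>L. v k j) mod 2) | L. L \<subseteq> K}"

text \<open>Quadratic function F_2^n -> F_2: a polynomial of degree at most 2
  (using x_i^2 = x_i, linear terms are the diagonal terms a i i).\<close>
definition quadratic_fun :: "nat \<Rightarrow> ((nat \<Rightarrow> nat) \<Rightarrow> nat) \<Rightarrow> bool" where
  "quadratic_fun n Q \<longleftrightarrow> (\<exists>(a::nat \<Rightarrow> nat \<Rightarrow> nat) (d::nat). \<forall>x\<in>F2vec n.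
      Q x = (d + (\<Sum>i\<in>{1..n}. \<Sum>j\<in>{i..n}. a i j * x i * x j)) mod 2)"

definition vec_of_list :: "nat list \<Rightarrow> nat \<Rightarrow> nat" where
  "vec_of_list l = (\<lambda>j. if 1 \<le> j \<and> j \<le> length l then l ! (j - 1) else 0)"

definition xi :: "nat \<Rightarrow> nat \<Rightarrow> nat" where
  "xi k = vec_of_list (
     if k = 1 then [1, 0, 0, 0, 1, 0, 0, 0, 1, 0, 1, 0, 1, 0, 1, 0, 1, 0, 1, 0, 0, 0, 1, 1, 1, 1, 0]
     else if k = 2 then [1, 0, 1, 0, 1, 0, 1, 1, 1, 0, 0, 1, 1, 0, 0, 0, 0, 0, 0, 0, 1, 0, 1, 0, 1, 0, 1]
     else if k = 3 then [0, 1, 1, 0, 0, 1, 1, 0, 0, 1, 1, 1, 1, 0, 0, 1, 1, 1, 1, 0, 0, 1, 1, 0, 0, 1, 1]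
     else if k = 4 then [0, 0, 0, 1, 1, 1, 1, 0, 0, 0, 0, 0, 0, 1, 1, 0, 0, 1, 1, 0, 0, 0, 0, 1, 1, 1, 1]
     else if k = 5 then [0, 0, 0, 0, 0, 0, 0, 1, 1, 1, 1, 1, 1, 1, 1, 0, 0, 0, 0, 1, 1, 1, 1, 1, 1, 1, 1]
     else if k = 6 then [0, 0, 0, 0, 0, 0, 0, 0, 0, 0, 0, 0, 0, 0, 0, 1, 1, 1, 1, 1, 1, 1, 1, 1, 1, 1, 1]
     else [])"

definition S27 :: "(nat \<Rightarrow> nat) set" where
  "S27 = F2_span xi {1..6}"

definition Q27 :: "(nat \<Rightarrow> nat) \<Rightarrow> nat" where
  "Q27 x = (x 1 * x 2 + x 1 * x 3 + x 1 * x 8 + x 2 * x 4 + x 2 * x 8 + x 2 * x 16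
          + x 3 * x 4 + x 3 * x 8 + x 3 * x 16 + x 4 * x 8 + x 8 * x 16) mod 2"

definition e27 :: "nat \<Rightarrow> nat" where
  "e27 j = [3, 5, 7, 5, 1, 3, 5, 7, 1, 3, 5, 5, 3, 7, 3, 3, 7, 1, 7, 3, 1, 5, 5, 5, 3, 5, 3] ! (j - 1)"

definition c27 :: "nat \<Rightarrow> complex" where
  "c27 j = exp (complex_of_real (pi * real (e27 j) / 4) * \<i>)"

end

theory Submission
  imports Defs "HOL-Number_Theory.Cong"
begin

(* With omega = exp (pi i / 4) we have c_j = omega ^ e_j and (-1) ^ Q = omega ^ (4 Q), so the
   phase identity is the congruence sum_j e_j x_j = 4 Q(x) (mod 8) on S, which is checked on the
   64 elements of S.  Phases in {1, -1, i, -i} are powers i ^ f_j, and with them the identity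
   would say sum_j f_j x_j = 2 Q(x) (mod 4) on S.  But nine vectors y_k of S carry integer
   weights w_k with sum_k w_k y_k = 0 (mod 4) in every coordinate, while
   sum_k w_k 2 Q(y_k) = 22 is not divisible by 4.  As S is a subspace, Q is quadratic and the
   c_j have modulus 1, this example also refutes (QFP). *)

lemma power_mod_eq_if_power_eq_1:
  fixes z :: "'a::monoid_mult"
  assumes "z ^ n = 1"
  shows "z ^ (m mod n) = z ^ m"
proof -
  have "z ^ m = z ^ (n * (m div n) + m mod n)"
    by simp
  also have "\<dots> = (z ^ n) ^ (m div n) * z ^ (m mod n)"
    by (simp only: power_add power_mult)
  finally show ?thesis
    using assms by simp
qed

lemma power_eq_power_if_cong:
  fixes z :: "'a::monoid_mult"
  assumes "z ^ n = 1" and "[a = b] (mod n)"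
  shows "z ^ a = z ^ b"
proof -
  have "z ^ a = z ^ (a mod n)" and "z ^ b = z ^ (b mod n)"
    using power_mod_eq_if_power_eq_1[OF assms(1)] by simp_all
  with assms(2) show ?thesis
    unfolding cong_def by simp
qed

lemma inj_on_imag_unit_power: "inj_on (\<lambda>p. \<i> ^ p) {..<4}"
  by (auto simp: inj_on_def lessThan_nat_numeral power3_eq_cube complex_eq_iff)

lemma imag_unit_power_eq_iff: "\<i> ^ a = \<i> ^ b \<longleftrightarrow> [a = b] (mod 4)"
proof
  assume "\<i> ^ a = \<i> ^ b"
  then have "\<i> ^ (a mod 4) = \<i> ^ (b mod 4)"
    by (simp add: power_mod_eq_if_power_eq_1)
  then show "[a = b] (mod 4)"
    unfolding cong_def using inj_on_imag_unit_power by (auto dest: inj_onD)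
next
  assume "[a = b] (mod 4)"
  then show "\<i> ^ a = \<i> ^ b"
    by (rule power_eq_power_if_cong[rotated]) simp
qed

lemma quarter_phase_eq_imag_unit_power:
  assumes "c \<in> {1, -1, \<i>, -\<i>}"
  shows "\<exists>k. c = \<i> ^ k"
proof -
  have "1 = \<i> ^ 0" "-1 = \<i> ^ 2" "\<i> = \<i> ^ 1" "-\<i> = \<i> ^ 3"
    by (simp_all add: power3_eq_cube)
  with assms show ?thesis by blast
qed

lemma prod_power_power_eq_power_sum:
  fixes z :: "'a::comm_monoid_mult"
  shows "(\<Prod>j\<in>J. (z ^ f j) ^ x j) = z ^ (\<Sum>j\<in>J. f j * x j)"
  by (simp add: power_sum power_mult)

lemma minus_one_power_eq_prod_if_cong:
  fixes z :: "'a::comm_ring_1"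
  assumes "z ^ 4 = -1" and "[(\<Sum>j\<in>J. e j * x j) = 4 * q] (mod 8)"
  shows "(-1) ^ q = (\<Prod>j\<in>J. (z ^ e j) ^ x j)"
proof -
  have "z ^ 8 = (z ^ 4) ^ 2"
    by (simp flip: power_mult)
  also have "\<dots> = 1"
    using assms(1) by simp
  finally have "z ^ 8 = 1" .
  have "(-1) ^ q = z ^ (4 * q)"
    by (simp add: assms(1) power_mult)
  also have "\<dots> = z ^ (\<Sum>j\<in>J. e j * x j)"
    using \<open>z ^ 8 = 1\<close> assms(2) by (rule power_eq_power_if_cong[OF _ cong_sym])
  finally show ?thesis
    by (simp add: prod_power_power_eq_power_sum)
qed

lemma cong_if_minus_one_power_eq_prod:
  assumes "(-1::complex) ^ q = (\<Prod>j\<in>J. (\<i> ^ f j) ^ x j)"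
  shows "[(\<Sum>j\<in>J. f j * x j) = 2 * q] (mod 4)"
proof -
  have "\<i> ^ (2 * q) = (-1::complex) ^ q"
    by (simp add: power_mult)
  also note assms
  also have "(\<Prod>j\<in>J. (\<i> ^ f j) ^ x j) = \<i> ^ (\<Sum>j\<in>J. f j * x j)"
    by (rule prod_power_power_eq_power_sum)
  finally have "[2 * q = (\<Sum>j\<in>J. f j * x j)] (mod 4)"
    by (simp only: imag_unit_power_eq_iff)
  then show ?thesis
    by (rule cong_sym)
qed

lemma no_quarter_phases_if_certificate:
  fixes Q :: "(nat \<Rightarrow> nat) \<Rightarrow> nat" and y :: "'k \<Rightarrow> nat \<Rightarrow> nat" and w :: "'k \<Rightarrow> int"
  assumes vectors: "\<forall>k\<in>K. y k \<in> S"
    and cancel: "\<forall>j\<in>J. [(\<Sum>k\<in>K. w k * int (y k j)) = 0] (mod 4)"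
    and obstruct: "[(\<Sum>k\<in>K. w k * int (2 * Q (y k))) \<noteq> 0] (mod 4)"
  shows "\<not> (\<exists>c. (\<forall>j\<in>J. c j \<in> {1, -1, \<i>, -\<i>})
              \<and> (\<forall>x\<in>S. (-1::complex) ^ Q x = (\<Prod>j\<in>J. c j ^ x j)))"
proof
  assume "\<exists>c. (\<forall>j\<in>J. c j \<in> {1, -1, \<i>, -\<i>})
              \<and> (\<forall>x\<in>S. (-1::complex) ^ Q x = (\<Prod>j\<in>J. c j ^ x j))"
  then obtain c where quarter: "\<forall>j\<in>J. c j \<in> {1, -1, \<i>, -\<i>}"
    and phase: "\<forall>x\<in>S. (-1::complex) ^ Q x = (\<Prod>j\<in>J. c j ^ x j)"
    by blast
  have "\<forall>j\<in>J. \<exists>k. c j = \<i> ^ k"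
    using quarter quarter_phase_eq_imag_unit_power by blast
  then have "\<exists>f. \<forall>j\<in>J. c j = \<i> ^ f j"
    by (rule bchoice)
  then obtain f where f: "\<forall>j\<in>J. c j = \<i> ^ f j"
    by blast
  have per_vector: "[int (2 * Q (y k)) = (\<Sum>j\<in>J. int (f j) * int (y k j))] (mod 4)"
    if "k \<in> K" for k
  proof -
    have "(\<Prod>j\<in>J. c j ^ y k j) = (\<Prod>j\<in>J. (\<i> ^ f j) ^ y k j)"
      using f by (intro prod.cong) auto
    with phase vectors that have "(-1::complex) ^ Q (y k) = (\<Prod>j\<in>J. (\<i> ^ f j) ^ y k j)"
      by simp
    then have "[(\<Sum>j\<in>J. f j * y k j) = 2 * Q (y k)] (mod 4)"
      by (rule cong_if_minus_one_power_eq_prod)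
    then have "[int (\<Sum>j\<in>J. f j * y k j) = int (2 * Q (y k))] (mod int 4)"
      by (rule cong_int_iff[THEN iffD2])
    then show ?thesis
      by (simp add: cong_sym_eq)
  qed
  have "[(\<Sum>k\<in>K. w k * int (2 * Q (y k)))
        = (\<Sum>k\<in>K. w k * (\<Sum>j\<in>J. int (f j) * int (y k j)))] (mod 4)"
    using per_vector by (intro cong_sum cong_scalar_left)
  also have "(\<Sum>k\<in>K. w k * (\<Sum>j\<in>J. int (f j) * int (y k j)))
        = (\<Sum>j\<in>J. int (f j) * (\<Sum>k\<in>K. w k * int (y k j)))"
    unfolding sum_distrib_left by (subst sum.swap) (simp add: mult.left_commute)
  also have "[\<dots> = (\<Sum>j\<in>J. int (f j) * 0)] (mod 4)"
    using cancel by (intro cong_sum cong_scalar_left) simp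
  finally show False
    using obstruct by simp
qed

lemma sum_mod_2_sym_diff:
  fixes g :: "'a \<Rightarrow> nat"
  assumes "finite A" and "finite B"
  shows "(sum g A + sum g B) mod 2 = sum g ((A - B) \<union> (B - A)) mod 2"
proof -
  have "sum g A = sum g (A \<inter> B) + sum g (A - B)"
    using assms(1) by (rule sum.Int_Diff)
  moreover have "sum g B = sum g (A \<inter> B) + sum g (B - A)"
    using assms(2) by (metis inf_commute sum.Int_Diff)
  moreover have "sum g ((A - B) \<union> (B - A)) = sum g (A - B) + sum g (B - A)"
    using assms by (intro sum.union_disjoint) auto
  ultimately show ?thesis
    by presburger
qed

lemma F2add_span_vectors:
  assumes "finite L" and "finite L'"
  shows "F2add (\<lambda>j. (\<Sum>k\<in>L. v k j) mod 2) (\<lambda>j. (\<Sum>k\<in>L'. v k j) mod 2)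
    = (\<lambda>j. (\<Sum>k\<in>(L - L') \<union> (L' - L). v k j) mod 2)"
  using assms by (simp add: F2add_def mod_add_eq sum_mod_2_sym_diff)

lemma F2_subspace_F2_span:
  assumes "finite K" and vectors: "\<forall>k\<in>K. v k \<in> F2vec n"
  shows "F2_subspace n (F2_span v K)"
  unfolding F2_subspace_def
proof (intro conjI ballI subsetI)
  fix x assume "x \<in> F2_span v K"
  then obtain L where "L \<subseteq> K" and x: "x = (\<lambda>j. (\<Sum>k\<in>L. v k j) mod 2)"
    by (auto simp: F2_span_def)
  have "v k j = 0" if "k \<in> L" and "j \<notin> {1..n}" for k j
    using vectors \<open>L \<subseteq> K\<close> that by (auto simp: F2vec_def)
  then show "x \<in> F2vec n"
    unfolding x F2vec_def by auto
next
  show "(\<lambda>_. 0) \<in> F2_span v K"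
    unfolding F2_span_def by (rule CollectI, rule exI[of _ "{}"]) simp
next
  fix x y assume "x \<in> F2_span v K" and "y \<in> F2_span v K"
  then obtain L L' where "L \<subseteq> K" "L' \<subseteq> K"
    and "x = (\<lambda>j. (\<Sum>k\<in>L. v k j) mod 2)" and "y = (\<lambda>j. (\<Sum>k\<in>L'. v k j) mod 2)"
    by (auto simp: F2_span_def)
  moreover from this have "finite L" "finite L'"
    using \<open>finite K\<close> finite_subset by blast+
  ultimately show "F2add x y \<in> F2_span v K"
    unfolding F2_span_def by (auto simp: F2add_span_vectors)
qed

lemma vec_of_list_in_F2vec:
  assumes "set l \<subseteq> {0, 1}" and "length l = n"
  shows "vec_of_list l \<in> F2vec n"
proof -
  have "l ! (j - 1) \<in> {0, 1}" if "1 \<le> j" and "j \<le> length l" for j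
    using that by (intro subsetD[OF assms(1)] nth_mem) simp
  then show ?thesis
    using assms(2) by (auto simp: F2vec_def vec_of_list_def)
qed

lemma quadratic_fun_if_sum_pairs:
  assumes pairs: "P \<subseteq> {(i, j). 1 \<le> i \<and> i \<le> j \<and> j \<le> n}"
    and Q: "\<forall>x\<in>F2vec n. Q x = (\<Sum>(i, j)\<in>P. x i * x j) mod 2"
  shows "quadratic_fun n Q"
  unfolding quadratic_fun_def
proof (intro exI ballI)
  fix x :: "nat \<Rightarrow> nat" assume "x \<in> F2vec n"
  have "(\<Sum>i\<in>{1..n}. \<Sum>j\<in>{i..n}. of_bool ((i, j) \<in> P) * x i * x j)
      = (\<Sum>(i, j)\<in>Sigma {1..n} (\<lambda>i. {i..n}). of_bool ((i, j) \<in> P) * x i * x j)"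
    by (simp add: sum.Sigma)
  also have "\<dots> = (\<Sum>(i, j)\<in>P. x i * x j)"
    using pairs by (intro sum.mono_neutral_cong_right) auto
  finally show "Q x = (0 + (\<Sum>i\<in>{1..n}. \<Sum>j\<in>{i..n}. of_bool ((i, j) \<in> P) * x i * x j)) mod 2"
    using Q \<open>x \<in> F2vec n\<close> by simp
qed

lemma atLeastAtMost_1_6: "{1..6::nat} = {1, 2, 3, 4, 5, 6}"
  by (auto simp: atLeastAtMost_upt upt_rec)

lemma atLeastAtMost_1_27:
  "{1..27::nat} = {1, 2, 3, 4, 5, 6, 7, 8, 9, 10, 11, 12, 13, 14, 15, 16, 17, 18, 19, 20,
     21, 22, 23, 24, 25, 26, 27}"
  by (auto simp: atLeastAtMost_upt upt_rec)

lemma F2_subspace_S27: "F2_subspace 27 S27"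
  unfolding S27_def
  by (rule F2_subspace_F2_span) (auto simp: atLeastAtMost_1_6 xi_def intro!: vec_of_list_in_F2vec)

lemma quadratic_fun_Q27: "quadratic_fun 27 Q27"
  by (rule quadratic_fun_if_sum_pairs[where P = "{(1, 2), (1, 3), (1, 8), (2, 4), (2, 8), (2, 16),
      (3, 4), (3, 8), (3, 16), (4, 8), (8, 16)}"]) (auto simp: Q27_def add.assoc)

lemma e27_exponent_cong_xi_combination:
  fixes \<beta> :: "nat \<Rightarrow> nat"
  assumes "\<forall>k. \<beta> k \<le> 1"
  defines "x \<equiv> \<lambda>j. (\<Sum>k\<in>{1..6}. \<beta> k * xi k j) mod 2"
  shows "[(\<Sum>j\<in>{1..27}. e27 j * x j) = 4 * Q27 x] (mod 8)"
proof -
  have bit: "\<beta> k = 0 \<or> \<beta> k = 1" for k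
    using assms(1) le_eq_less_or_eq by auto
  show ?thesis
    using bit[of 1] bit[of 2] bit[of 3] bit[of 4] bit[of 5] bit[of 6]
    unfolding x_def cong_def atLeastAtMost_1_27 atLeastAtMost_1_6
    by (simp add: xi_def vec_of_list_def e27_def Q27_def) (elim disjE; simp)
qed

lemma e27_exponent_cong_on_S27:
  assumes "x \<in> S27"
  shows "[(\<Sum>j\<in>{1..27}. e27 j * x j) = 4 * Q27 x] (mod 8)"
proof -
  obtain L where "L \<subseteq> {1..6}" and "x = (\<lambda>j. (\<Sum>k\<in>L. xi k j) mod 2)"
    using assms by (auto simp: S27_def F2_span_def)
  then have "x = (\<lambda>j. (\<Sum>k\<in>{1..6}. of_bool (k \<in> L) * xi k j) mod 2)"
    by (simp add: Int_absorb1)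
  then show ?thesis
    using e27_exponent_cong_xi_combination[of "\<lambda>k. of_bool (k \<in> L)"] by simp
qed

lemma c27_eq_power: "c27 j = exp (complex_of_real (pi / 4) * \<i>) ^ e27 j"
proof -
  have "complex_of_real (pi * real (e27 j) / 4) * \<i> = of_nat (e27 j) * (complex_of_real (pi / 4) * \<i>)"
    by simp
  then show ?thesis
    unfolding c27_def by (simp only: exp_of_nat_mult)
qed

lemma exp_pi_quarter_power_4: "exp (complex_of_real (pi / 4) * \<i>) ^ 4 = -1"
proof -
  have "exp (complex_of_real (pi / 4) * \<i>) ^ 4 = exp (of_nat 4 * (complex_of_real (pi / 4) * \<i>))"
    by (simp only: exp_of_nat_mult)
  also have "of_nat 4 * (complex_of_real (pi / 4) * \<i>) = complex_of_real pi * \<i>"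
    by simp
  finally show ?thesis
    by simp
qed

lemma minus_one_power_Q27_eq_prod_c27:
  assumes "x \<in> S27"
  shows "(-1) ^ Q27 x = (\<Prod>j\<in>{1..27}. c27 j ^ x j)"
  unfolding c27_eq_power
  using exp_pi_quarter_power_4 e27_exponent_cong_on_S27[OF assms]
  by (rule minus_one_power_eq_prod_if_cong)

definition obstruction_subsets :: "nat set list" where
  "obstruction_subsets = [{5, 6}, {4, 5, 6}, {3, 4, 5}, {2}, {2, 5}, {2, 4, 5}, {2, 3, 4, 6}, {1, 6}, {1, 5}]"

definition obstruction_weights :: "int list" where
  "obstruction_weights = [3, 1, 3, 3, 3, 3, 1, 1, 1]"

definition obstruction_vector :: "nat \<Rightarrow> nat \<Rightarrow> nat" where
  "obstruction_vector k = (\<lambda>j. (\<Sum>i\<in>obstruction_subsets ! k. xi i j) mod 2)"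

lemma no_quarter_phases_S27:
  "\<not> (\<exists>c. (\<forall>j\<in>{1..27}. c j \<in> {1, -1, \<i>, -\<i>})
          \<and> (\<forall>x\<in>S27. (-1::complex) ^ Q27 x = (\<Prod>j\<in>{1..27}. c j ^ x j)))"
proof (rule no_quarter_phases_if_certificate[where K = "{..<9}" and y = obstruction_vector
      and w = "\<lambda>k. obstruction_weights ! k"])
  have "\<forall>k\<in>{..<9}. obstruction_subsets ! k \<subseteq> {1..6}"
    by (simp add: lessThan_nat_numeral obstruction_subsets_def)
  then show "\<forall>k\<in>{..<9}. obstruction_vector k \<in> S27"
    by (auto simp: S27_def F2_span_def obstruction_vector_def)
  show "\<forall>j\<in>{1..27}.
      [(\<Sum>k\<in>{..<9}. obstruction_weights ! k * int (obstruction_vector k j)) = 0] (mod 4)"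
    by (simp only: atLeastAtMost_1_27 ball_simps)
      (simp add: lessThan_nat_numeral obstruction_subsets_def obstruction_weights_def
        obstruction_vector_def xi_def vec_of_list_def cong_def)
  show "[(\<Sum>k\<in>{..<9}. obstruction_weights ! k * int (2 * Q27 (obstruction_vector k))) \<noteq> 0]
      (mod 4)"
    by (simp add: lessThan_nat_numeral obstruction_subsets_def obstruction_weights_def
        obstruction_vector_def xi_def vec_of_list_def Q27_def cong_def)
qed

theorem mainTheorem2:
  shows "(\<forall>x\<in>S27. (-1::complex) ^ Q27 x = (\<Prod>j\<in>{1..27}. c27 j ^ x j))
    \<and> \<not> (\<exists>c'::nat \<Rightarrow> complex. (\<forall>j\<in>{1..27}. c' j \<in> {1, -1, \<i>, -\<i>})
           \<and> (\<forall>x\<in>S27. (-1::complex) ^ Q27 x = (\<Prod>j\<in>{1..27}. c' j ^ x j)))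
    \<and> \<not> (\<forall>(n::nat) S Q. F2_subspace n S \<and> quadratic_fun n Q
           \<and> (\<exists>c::nat \<Rightarrow> complex. (\<forall>j\<in>{1..n}. norm (c j) = 1)
                \<and> (\<forall>x\<in>S. (-1::complex) ^ Q x = (\<Prod>j\<in>{1..n}. c j ^ x j)))
         \<longrightarrow> (\<exists>c'::nat \<Rightarrow> complex. (\<forall>j\<in>{1..n}. c' j \<in> {1, -1, \<i>, -\<i>})
                \<and> (\<forall>x\<in>S. (-1::complex) ^ Q x = (\<Prod>j\<in>{1..n}. c' j ^ x j))))"
proof -
  have phases: "\<forall>x\<in>S27. (-1::complex) ^ Q27 x = (\<Prod>j\<in>{1..27}. c27 j ^ x j)"
    using minus_one_power_Q27_eq_prod_c27 by blast
  have unimodular: "\<forall>j\<in>{1..27}. norm (c27 j) = 1"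
    by (simp add: c27_def)
  show ?thesis
    using phases unimodular no_quarter_phases_S27 F2_subspace_S27 quadratic_fun_Q27 by blast
qed

end
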